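(* Let $f\in\mathcal{CM}$ with representing measure $\nu$, and let $f_e:(\omega_0,\infty)\to\mathbb{R}$ be its extension. Then $f_e\in C^\infty(\omega_0,\infty)$, and for all $m\in\mathbb{N}\cup\{0\}$ and all $\lambda>\omega_0$: \[ (-1)^m f_e^{(m)}(\lambda)\ge0\quad\text{and}\quad f_e^{(m)}(\lambda)=(-1)^m\int_{[0,\infty)}t^m e^{-\lambda t}\,\nu(dt). \] In particular $f_e(\lambda)=\int_{[0,\infty)}e^{-\lambda t}\nu(dt)$ for all $\lambda>\omega_0$.
   Context: A function $f:(0,\infty)\to\mathbb{R}$ is completely monotone, $f\in\mathcal{CM}$, if it is $C^\infty$ and $(-1)^n f^{(n)}(\lambda)\ge0$ for all $n\ge0$, $\lambda>0$; its representing measure is the unique measure $\nu$ on $[0,\infty)$ with $f(\lambda)=\int_{[0,\infty)}e^{-\lambda t}\nu(dt)$. For $n\ge0$, $f^{(n)}(0+):=\lim_{\lambda\to0+}f^{(n)}(\lambda)\in[-\infty,\infty]$. If all $f^{(n)}(0+)$ are finite, $\omega_0=\omega_0^f:=\inf\{\lambda\in\mathbb{R}:\sum_{n\ge0}\frac{f^{(n)}(0+)}{n!}\lambda^n\text{ converges}\}$; otherwise $\omega_0:=0$. The extension $f_e:(\omega_0,\infty)\to\mathbb{R}$ is $f_e(\lambda)=\sum_{n\ge0}\frac{f^{(n)}(0+)}{n!}\lambda^n$ for $\omega_0<\lambda\le0$ and $f_e(\lambda)=f(\lambda)$ for $\lambda>0$. *)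

theory Defs
  imports "HOL-Analysis.Analysis"
begin

definition smooth_on :: "real set \<Rightarrow> (real \<Rightarrow> real) \<Rightarrow> bool" where
  "smooth_on S f \<longleftrightarrow> (\<forall>n. \<forall>x\<in>S. ((deriv ^^ n) f) differentiable (at x))"

definition completely_monotone :: "(real \<Rightarrow> real) \<Rightarrow> bool" where
  "completely_monotone f \<longleftrightarrow> smooth_on {0<..} f \<and>
     (\<forall>n. \<forall>x>0. (-1) ^ n * (deriv ^^ n) f x \<ge> 0)"

definition representing_measure :: "(real \<Rightarrow> real) \<Rightarrow> real measure \<Rightarrow> bool" where
  "representing_measure f nu \<longleftrightarrow>
     space nu = {0..} \<and> sets nu = sets (restrict_space borel {0..}) \<and>
     (\<forall>lam>0. (\<integral>\<^sup>+ t. ennreal (exp (- lam * t)) \<partial>nu) = ennreal (f lam))"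

definition deriv0_finite :: "(real \<Rightarrow> real) \<Rightarrow> nat \<Rightarrow> bool" where
  "deriv0_finite f n \<longleftrightarrow> (\<exists>L::real. (((deriv ^^ n) f) \<longlongrightarrow> L) (at_right 0))"

definition deriv0 :: "(real \<Rightarrow> real) \<Rightarrow> nat \<Rightarrow> real" where
  "deriv0 f n = Lim (at_right 0) ((deriv ^^ n) f)"

text \<open>omega_0 as an extended real (it can be -infinity).\<close>
definition omega0 :: "(real \<Rightarrow> real) \<Rightarrow> ereal" where
  "omega0 f = (if (\<forall>n. deriv0_finite f n)
      then Inf (ereal ` {lam::real. summable (\<lambda>n. deriv0 f n / fact n * lam ^ n)})
      else 0)"

definition ext_fun :: "(real \<Rightarrow> real) \<Rightarrow> real \<Rightarrow> real" where
  "ext_fun f lam = (if lam > 0 then f lam else (\<Sum>n. deriv0 f n / fact n * lam ^ n))"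

end

theory Submission
  imports Defs
begin

text \<open>Let G_m(l) be the integral of t^m exp(-l t) against nu. Wherever exp(-a t) is
  nu-integrable for some a < l, dominated convergence gives G_m' = -G_(m+1) near l, so every
  function agreeing with G_0 on an open set of such l has m-th derivative (-1)^m G_m there; by
  assumption f is such a function on (0, infinity). If all f^(n)(0+) are finite, monotone
  convergence identifies them with (-1)^n times the moments of nu, so the Taylor series defining
  f_e at l <= 0 is the termwise integral of exp(-l t) = sum (-l t)^n / n!. By Tonelli, convergence
  of that series at some l' < l makes exp(-l' t) integrable, and its value at l is G_0(l). Hence
  f_e = G_0 on the open set (omega_0, infinity), which consists of such l.\<close>

lemma power_div_fact_le_exp:
  fixes x :: real
  assumes "0 \<le> x"
  shows "x ^ n / fact n \<le> exp x"
proof -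
  have sums: "(\<lambda>n. x ^ n / fact n) sums exp x"
    using exp_converges[of x] by (simp add: divide_inverse mult.commute)
  have "(\<Sum>k\<in>{n}. x ^ k / fact k) \<le> (\<Sum>k. x ^ k / fact k)"
    using assms by (intro sum_le_suminf[OF sums_summable[OF sums]]) auto
  with sums show ?thesis by (simp add: sums_iff)
qed

lemma power_mult_exp_neg_le:
  fixes t c :: real
  assumes "0 \<le> t" and "0 < c"
  shows "t ^ n * exp (- c * t) \<le> fact n / c ^ n"
proof -
  have "(c * t) ^ n / fact n \<le> exp (c * t)"
    using assms by (intro power_div_fact_le_exp) simp
  hence "c ^ n * t ^ n * exp (- c * t) \<le> fact n * exp (c * t) * exp (- c * t)"
    by (intro mult_right_mono) (auto simp: field_simps power_mult_distrib)
  also have "\<dots> = fact n"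
    by (simp add: mult.assoc flip: exp_add)
  finally show ?thesis
    using assms by (simp add: field_simps)
qed

lemma abs_exp_neg_mult_diff_le:
  fixes t x y b :: real
  assumes "0 \<le> t" and "b \<le> x" and "b \<le> y"
  shows "\<bar>exp (- x * t) - exp (- y * t)\<bar> \<le> t * exp (- b * t) * \<bar>x - y\<bar>"
proof -
  have ordered: "\<bar>exp (- x * t) - exp (- y * t)\<bar> \<le> t * exp (- b * t) * \<bar>x - y\<bar>"
    if "x \<le> y" "b \<le> x" for x y
  proof -
    have split: "exp (- y * t) = exp (- x * t) * exp (- ((y - x) * t))"
      by (simp add: algebra_simps flip: exp_add)
    have "0 \<le> 1 - exp (- ((y - x) * t))"
      using that assms by simp
    moreover have "1 - exp (- ((y - x) * t)) \<le> (y - x) * t"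
      using exp_ge_add_one_self[of "- ((y - x) * t)"] by simp
    moreover have "exp (- x * t) \<le> exp (- b * t)"
      using that assms by (simp add: mult_right_mono)
    ultimately have "exp (- x * t) * (1 - exp (- ((y - x) * t))) \<le> exp (- b * t) * ((y - x) * t)"
      by (intro mult_mono) auto
    moreover have "\<bar>exp (- x * t) - exp (- y * t)\<bar> = exp (- x * t) * (1 - exp (- ((y - x) * t)))"
      using \<open>0 \<le> 1 - exp (- ((y - x) * t))\<close> unfolding split by (simp add: algebra_simps)
    ultimately show ?thesis
      using that by (simp add: algebra_simps)
  qed
  show ?thesis
    using ordered[of x y] ordered[of y x] assms by (cases "x \<le> y") (auto simp: abs_minus_commute)
qed

lemma abs_power_exp_diff_quotient_le:
  fixes t x l b :: real
  assumes "0 \<le> t" and "b \<le> x" and "b \<le> l" and "x \<noteq> l"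
  shows "\<bar>(t ^ m * exp (- x * t) - t ^ m * exp (- l * t)) / (x - l)\<bar> \<le> t ^ Suc m * exp (- b * t)"
proof -
  have "t ^ m * \<bar>exp (- x * t) - exp (- l * t)\<bar> \<le> t ^ m * (t * exp (- b * t) * \<bar>x - l\<bar>)"
    using assms by (intro mult_left_mono abs_exp_neg_mult_diff_le) auto
  moreover have "\<bar>(t ^ m * exp (- x * t) - t ^ m * exp (- l * t)) / (x - l)\<bar>
      = t ^ m * \<bar>exp (- x * t) - exp (- l * t)\<bar> / \<bar>x - l\<bar>"
    using assms by (simp add: abs_mult right_diff_distrib[symmetric])
  ultimately show ?thesis
    using assms by (simp add: pos_divide_le_eq mult_ac)
qed

lemma power_exp_diff_quotient_tendsto:
  fixes t l :: real
  assumes "X \<longlonglongrightarrow> l" and "\<And>i. X i \<noteq> l"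
  shows "(\<lambda>i. (t ^ m * exp (- X i * t) - t ^ m * exp (- l * t)) / (X i - l))
    \<longlonglongrightarrow> - (t ^ Suc m * exp (- l * t))"
proof -
  have "((\<lambda>y. t ^ m * exp (- y * t)) has_real_derivative - (t ^ Suc m * exp (- l * t))) (at l)"
    by (auto intro!: derivative_eq_intros)
  hence "((\<lambda>y. (t ^ m * exp (- y * t) - t ^ m * exp (- l * t)) / (y - l))
      \<longlongrightarrow> - (t ^ Suc m * exp (- l * t))) (at l)"
    unfolding has_field_derivative_iff .
  thus ?thesis
    unfolding tendsto_at_iff_sequentially comp_def using assms by auto
qed

locale nonneg_real_measure =
  fixes nu :: "real measure"
  assumes space_eq: "space nu = {0..}"
    and sets_eq: "sets nu = sets (restrict_space borel {0..})"
begin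

lemma borel_measurable_nu:
  "g \<in> borel_measurable borel \<Longrightarrow> g \<in> borel_measurable nu"
  using measurable_cong_sets[OF sets_eq refl] measurable_restrict_space1 by blast

lemma AE_nonneg: "AE t in nu. 0 \<le> t"
  by (rule AE_I2) (simp add: space_eq)

definition laplace_domain :: "real set" where
  "laplace_domain = {l. integrable nu (\<lambda>t. exp (- l * t))}"

definition laplace_moment :: "nat \<Rightarrow> real \<Rightarrow> real" where
  "laplace_moment m l = (\<integral>t. t ^ m * exp (- l * t) \<partial>nu)"

lemma laplace_moment_nonneg: "0 \<le> laplace_moment m l"
  unfolding laplace_moment_def
  using AE_nonneg by (intro integral_nonneg_AE) (auto elim!: eventually_mono)

lemma laplace_domain_mono:
  assumes "a \<in> laplace_domain" and "a \<le> l"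
  shows "l \<in> laplace_domain"
proof -
  have "integrable nu (\<lambda>t. exp (- l * t))"
  proof (rule Bochner_Integration.integrable_bound)
    show "integrable nu (\<lambda>t. exp (- a * t))"
      using assms by (simp add: laplace_domain_def)
    show "(\<lambda>t. exp (- l * t)) \<in> borel_measurable nu"
      by (intro borel_measurable_nu) measurable
    show "AE t in nu. norm (exp (- l * t)) \<le> norm (exp (- a * t))"
      using AE_nonneg by eventually_elim (use assms in \<open>auto intro: mult_right_mono\<close>)
  qed
  thus ?thesis
    by (simp add: laplace_domain_def)
qed

lemma integrable_power_mult_exp:
  assumes "a \<in> laplace_domain" and "a < l"
  shows "integrable nu (\<lambda>t. t ^ m * exp (- l * t))"
proof (rule Bochner_Integration.integrable_bound)
  show "integrable nu (\<lambda>t. fact m / (l - a) ^ m * exp (- a * t))"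
    using assms by (intro integrable_mult_right) (simp add: laplace_domain_def)
  show "(\<lambda>t. t ^ m * exp (- l * t)) \<in> borel_measurable nu"
    by (intro borel_measurable_nu) measurable
  show "AE t in nu. norm (t ^ m * exp (- l * t)) \<le> norm (fact m / (l - a) ^ m * exp (- a * t))"
    using AE_nonneg
  proof eventually_elim
    case (elim t)
    have "t ^ m * exp (- (l - a) * t) * exp (- a * t) \<le> fact m / (l - a) ^ m * exp (- a * t)"
      using elim assms by (intro mult_right_mono power_mult_exp_neg_le) auto
    moreover have "exp (- (l - a) * t) * exp (- a * t) = exp (- l * t)"
      by (simp add: algebra_simps flip: exp_add)
    ultimately show ?case
      using elim assms by (simp add: mult.assoc)
  qed
qed

text \<open>Difference quotients are taken only at points above the midpoint b of a and l, so that
  they are dominated by the integrable function t^(m+1) exp(-b t).\<close>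

lemma has_real_derivative_laplace_moment:
  assumes a: "a \<in> laplace_domain" and al: "a < l"
  shows "(laplace_moment m has_real_derivative - laplace_moment (Suc m) l) (at l)"
proof -
  define b where "b = (a + l) / 2"
  have ab: "a < b" and bl: "b < l"
    using al by (auto simp: b_def)
  let ?S = "{b<..}"
  have "((\<lambda>y. (laplace_moment m y - laplace_moment m l) / (y - l))
          \<longlongrightarrow> - laplace_moment (Suc m) l) (at l within ?S)"
    unfolding tendsto_at_iff_sequentially comp_def
  proof (intro allI impI)
    fix X :: "nat \<Rightarrow> real"
    assume XS: "\<forall>i. X i \<in> ?S - {l}" and Xl: "X \<longlonglongrightarrow> l"
    have Xb: "b < X i" and Xne: "X i \<noteq> l" for i
      using XS by auto
    define q where "q i t = (t ^ m * exp (- X i * t) - t ^ m * exp (- l * t)) / (X i - l)" for i t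
    have quotient_eq: "(laplace_moment m (X i) - laplace_moment m l) / (X i - l) = integral\<^sup>L nu (q i)" for i
    proof -
      have "integrable nu (\<lambda>t. t ^ m * exp (- X i * t))"
        using integrable_power_mult_exp[OF a, of "X i"] ab Xb[of i] by auto
      moreover have "integrable nu (\<lambda>t. t ^ m * exp (- l * t))"
        using integrable_power_mult_exp[OF a al] .
      ultimately show ?thesis
        unfolding q_def laplace_moment_def by simp
    qed
    have "(\<lambda>i. integral\<^sup>L nu (q i)) \<longlonglongrightarrow> integral\<^sup>L nu (\<lambda>t. - (t ^ Suc m * exp (- l * t)))"
    proof (rule integral_dominated_convergence[where w="\<lambda>t. t ^ Suc m * exp (- b * t)"])
      show "(\<lambda>t. - (t ^ Suc m * exp (- l * t))) \<in> borel_measurable nu"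
        by (intro borel_measurable_nu) measurable
      show "q i \<in> borel_measurable nu" for i
        unfolding q_def by (intro borel_measurable_nu) measurable
      show "integrable nu (\<lambda>t. t ^ Suc m * exp (- b * t))"
        using integrable_power_mult_exp[OF a ab] .
      show "AE t in nu. (\<lambda>i. q i t) \<longlonglongrightarrow> - (t ^ Suc m * exp (- l * t))"
        unfolding q_def using power_exp_diff_quotient_tendsto[OF Xl Xne] by simp
      show "AE t in nu. norm (q i t) \<le> t ^ Suc m * exp (- b * t)" for i
        using AE_nonneg
      proof eventually_elim
        case (elim t)
        show ?case
          unfolding q_def real_norm_def
          by (rule abs_power_exp_diff_quotient_le) (use elim Xb[of i] Xne[of i] bl in auto)
      qed
    qed
    moreover have "integral\<^sup>L nu (\<lambda>t. - (t ^ Suc m * exp (- l * t))) = - laplace_moment (Suc m) l"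
      by (simp add: laplace_moment_def)
    ultimately show "(\<lambda>i. (laplace_moment m (X i) - laplace_moment m l) / (X i - l))
        \<longlonglongrightarrow> - laplace_moment (Suc m) l"
      by (simp only: quotient_eq)
  qed
  thus ?thesis
    unfolding has_field_derivative_iff using at_within_open[of l ?S] bl by simp
qed

lemma has_real_derivative_if_eq_signed_laplace_moment:
  assumes "open S" and S: "\<And>x. x \<in> S \<Longrightarrow> \<exists>a\<in>laplace_domain. a < x"
    and h: "\<And>x. x \<in> S \<Longrightarrow> h x = (-1) ^ n * laplace_moment n x"
    and "l \<in> S"
  shows "(h has_real_derivative (-1) ^ Suc n * laplace_moment (Suc n) l) (at l)"
proof -
  obtain a where "a \<in> laplace_domain" "a < l"
    using S \<open>l \<in> S\<close> by blast
  from DERIV_cmult[OF has_real_derivative_laplace_moment[OF this], of "(-1) ^ n" n]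
  have "((\<lambda>x. (-1) ^ n * laplace_moment n x) has_real_derivative
          (-1) ^ Suc n * laplace_moment (Suc n) l) (at l)"
    by simp
  moreover have ev: "\<forall>\<^sub>F x in nhds l. h x = (-1) ^ n * laplace_moment n x"
    using eventually_nhds_in_open[OF \<open>open S\<close> \<open>l \<in> S\<close>] by eventually_elim (rule h)
  ultimately show ?thesis
    using DERIV_cong_ev[OF refl ev refl] by simp
qed

lemma higher_deriv_eq_signed_laplace_moment:
  assumes "open S" and S: "\<And>x. x \<in> S \<Longrightarrow> \<exists>a\<in>laplace_domain. a < x"
    and g: "\<And>x. x \<in> S \<Longrightarrow> g x = laplace_moment 0 x"
    and "l \<in> S"
  shows "(deriv ^^ n) g l = (-1) ^ n * laplace_moment n l"
  using \<open>l \<in> S\<close>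
proof (induction n arbitrary: l)
  case 0
  then show ?case
    using g by simp
next
  case (Suc n)
  have "((deriv ^^ n) g has_real_derivative (-1) ^ Suc n * laplace_moment (Suc n) l) (at l)"
    using has_real_derivative_if_eq_signed_laplace_moment[OF \<open>open S\<close> S Suc.IH Suc.prems] .
  then show ?case
    using DERIV_imp_deriv by simp
qed

lemma nn_integral_exp_eq_moment_series:
  assumes moments: "\<And>n. integrable nu (\<lambda>t. t ^ n)" and "0 \<le> c"
  shows "(\<integral>\<^sup>+t. ennreal (exp (c * t)) \<partial>nu) = (\<Sum>n. ennreal (c ^ n / fact n * (\<integral>t. t ^ n \<partial>nu)))"
proof -
  have "(\<integral>\<^sup>+t. ennreal (exp (c * t)) \<partial>nu) = (\<integral>\<^sup>+t. (\<Sum>n. ennreal (c ^ n / fact n * t ^ n)) \<partial>nu)"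
  proof (rule nn_integral_cong)
    fix t
    assume "t \<in> space nu"
    hence "0 \<le> t"
      by (simp add: space_eq)
    have "(\<lambda>n. (c * t) ^ n / fact n) sums exp (c * t)"
      using exp_converges[of "c * t"] by (simp add: divide_inverse mult.commute)
    hence "(\<lambda>n. c ^ n / fact n * t ^ n) sums exp (c * t)"
      by (simp add: power_mult_distrib)
    thus "ennreal (exp (c * t)) = (\<Sum>n. ennreal (c ^ n / fact n * t ^ n))"
      using \<open>0 \<le> t\<close> \<open>0 \<le> c\<close> by (subst suminf_ennreal2) (auto simp: sums_iff)
  qed
  also have "\<dots> = (\<Sum>n. \<integral>\<^sup>+t. ennreal (c ^ n / fact n * t ^ n) \<partial>nu)"
    by (rule nn_integral_suminf) (intro measurable_compose[OF borel_measurable_nu]; measurable)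
  also have "\<dots> = (\<Sum>n. ennreal (c ^ n / fact n * (\<integral>t. t ^ n \<partial>nu)))"
  proof (rule suminf_cong)
    fix n
    have "(\<integral>\<^sup>+t. ennreal (c ^ n / fact n * t ^ n) \<partial>nu) = ennreal (\<integral>t. c ^ n / fact n * t ^ n \<partial>nu)"
      using AE_nonneg \<open>0 \<le> c\<close>
      by (intro nn_integral_eq_integral integrable_mult_right moments) (auto elim!: eventually_mono)
    thus "(\<integral>\<^sup>+t. ennreal (c ^ n / fact n * t ^ n) \<partial>nu) = ennreal (c ^ n / fact n * (\<integral>t. t ^ n \<partial>nu))"
      by simp
  qed
  finally show ?thesis .
qed

lemma moment_series_nonneg:
  "l \<le> 0 \<Longrightarrow> 0 \<le> (- l) ^ n / fact n * (\<integral>t. t ^ n \<partial>nu)"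
  using laplace_moment_nonneg[of n 0] by (simp add: laplace_moment_def)

lemma laplace_domain_if_moment_series_summable:
  assumes moments: "\<And>n. integrable nu (\<lambda>t. t ^ n)" and "l \<le> 0"
    and "summable (\<lambda>n. (- l) ^ n / fact n * (\<integral>t. t ^ n \<partial>nu))"
  shows "l \<in> laplace_domain"
proof -
  have "(\<integral>\<^sup>+t. ennreal (exp (- l * t)) \<partial>nu) = (\<Sum>n. ennreal ((- l) ^ n / fact n * (\<integral>t. t ^ n \<partial>nu)))"
    using nn_integral_exp_eq_moment_series[OF moments, of "- l"] \<open>l \<le> 0\<close> by simp
  also have "\<dots> = ennreal (\<Sum>n. (- l) ^ n / fact n * (\<integral>t. t ^ n \<partial>nu))"
    using assms moment_series_nonneg by (intro suminf_ennreal2) auto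
  finally have "(\<integral>\<^sup>+t. ennreal (norm (exp (- l * t))) \<partial>nu) < \<infinity>"
    by simp
  hence "integrable nu (\<lambda>t. exp (- l * t))"
    by (intro integrableI_bounded borel_measurable_nu) measurable
  thus ?thesis
    by (simp add: laplace_domain_def)
qed

lemma moment_series_sums_laplace_moment:
  assumes moments: "\<And>n. integrable nu (\<lambda>t. t ^ n)" and "l \<le> 0" and "l \<in> laplace_domain"
  shows "(\<lambda>n. (- l) ^ n / fact n * (\<integral>t. t ^ n \<partial>nu)) sums laplace_moment 0 l"
proof -
  let ?a = "\<lambda>n. (- l) ^ n / fact n * (\<integral>t. t ^ n \<partial>nu)"
  have "ennreal (laplace_moment 0 l) = ennreal (\<integral>t. exp (- l * t) \<partial>nu)"
    by (simp add: laplace_moment_def)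
  also have "\<dots> = (\<integral>\<^sup>+t. ennreal (exp (- l * t)) \<partial>nu)"
    using assms(3) unfolding laplace_domain_def by (intro nn_integral_eq_integral[symmetric]) auto
  also have "\<dots> = (\<Sum>n. ennreal (?a n))"
    using nn_integral_exp_eq_moment_series[OF moments, of "- l"] \<open>l \<le> 0\<close> by simp
  finally have sum_eq: "ennreal (laplace_moment 0 l) = (\<Sum>n. ennreal (?a n))" .
  have summable: "summable ?a"
    using moment_series_nonneg \<open>l \<le> 0\<close> sum_eq[symmetric] by (intro summable_suminf_not_top) auto
  hence "ennreal (laplace_moment 0 l) = ennreal (suminf ?a)"
    using sum_eq moment_series_nonneg \<open>l \<le> 0\<close> by (simp add: suminf_ennreal2)
  hence "laplace_moment 0 l = suminf ?a"
    using laplace_moment_nonneg summable moment_series_nonneg \<open>l \<le> 0\<close>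
    by (subst (asm) ennreal_inj) (auto intro: suminf_nonneg)
  with summable show ?thesis
    by (simp add: sums_iff)
qed

lemma moment_eq_if_laplace_moment_tendsto_at_right_0:
  assumes "\<And>l. 0 < l \<Longrightarrow> l \<in> laplace_domain"
    and "(laplace_moment n \<longlongrightarrow> L) (at_right 0)"
  shows "integrable nu (\<lambda>t. t ^ n) \<and> (\<integral>t. t ^ n \<partial>nu) = L"
proof -
  define s where "s k = inverse (real (Suc k))" for k
  have s_pos: "0 < s k" and s_Suc: "s (Suc k) \<le> s k" for k
    by (simp_all add: s_def field_simps)
  have s_lim: "s \<longlonglongrightarrow> 0"
    unfolding s_def by (rule LIMSEQ_inverse_real_of_nat)
  have "filterlim s (at_right 0) sequentially"
    unfolding filterlim_at using s_pos s_lim by (auto intro!: always_eventually simp: less_imp_neq[symmetric])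
  from filterlim_compose[OF assms(2) this]
  have lim: "(\<lambda>k. integral\<^sup>L nu (\<lambda>t. t ^ n * exp (- s k * t))) \<longlonglongrightarrow> L"
    by (simp add: laplace_moment_def)
  have integrable: "integrable nu (\<lambda>t. t ^ n * exp (- s k * t))" for k
    using integrable_power_mult_exp[OF assms(1)[of "s k / 2"], of "s k" n] s_pos[of k] by simp
  have inc: "AE t in nu. incseq (\<lambda>k. t ^ n * exp (- s k * t))"
    using AE_nonneg
  proof eventually_elim
    case (elim t)
    have "- s k * t \<le> - s (Suc k) * t" for k
      using s_Suc[of k] elim by (intro mult_right_mono) auto
    thus ?case
      using elim by (intro incseq_SucI mult_left_mono) auto
  qed
  have pointwise: "AE t in nu. (\<lambda>k. t ^ n * exp (- s k * t)) \<longlonglongrightarrow> t ^ n"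
  proof (rule AE_I2)
    fix t
    have "(\<lambda>k. t ^ n * exp (- s k * t)) \<longlonglongrightarrow> t ^ n * exp (- 0 * t)"
      by (intro tendsto_intros s_lim)
    thus "(\<lambda>k. t ^ n * exp (- s k * t)) \<longlonglongrightarrow> t ^ n"
      by simp
  qed
  have "(\<lambda>t. t ^ n) \<in> borel_measurable nu"
    by (intro borel_measurable_nu) measurable
  with integrable_monotone_convergence[OF integrable inc pointwise lim]
    integral_monotone_convergence[OF integrable inc pointwise lim]
  show ?thesis
    by blast
qed

end

lemma open_Collect_ereal_less: "open {x::real. e < ereal x}"
  by (cases e) (auto simp flip: greaterThan_def)

locale laplace_representation =
  fixes f :: "real \<Rightarrow> real" and nu :: "real measure"
  assumes completely_monotone: "completely_monotone f"
    and representing_measure: "representing_measure f nu"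
begin

sublocale nonneg_real_measure nu
  using representing_measure by unfold_locales (simp_all add: representing_measure_def)

lemma nn_integral_exp_eq:
  "0 < l \<Longrightarrow> (\<integral>\<^sup>+t. ennreal (exp (- l * t)) \<partial>nu) = ennreal (f l)"
  using representing_measure by (simp add: representing_measure_def)

lemma nonneg: "0 < l \<Longrightarrow> 0 \<le> f l"
  using completely_monotone unfolding completely_monotone_def by (metis funpow_0 mult_1 power_0)

lemma positive_in_laplace_domain:
  assumes "0 < l"
  shows "l \<in> laplace_domain"
proof -
  have "integrable nu (\<lambda>t. exp (- l * t))"
  proof (rule integrableI_bounded)
    show "(\<lambda>t. exp (- l * t)) \<in> borel_measurable nu"
      by (intro borel_measurable_nu) measurable
    show "(\<integral>\<^sup>+t. ennreal (norm (exp (- l * t))) \<partial>nu) < \<infinity>"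
      using nn_integral_exp_eq[OF assms] by simp
  qed
  thus ?thesis
    by (simp add: laplace_domain_def)
qed

lemma eq_laplace_moment:
  assumes "0 < l"
  shows "f l = laplace_moment 0 l"
proof -
  have "laplace_moment 0 l = enn2real (\<integral>\<^sup>+t. ennreal (exp (- l * t)) \<partial>nu)"
    unfolding laplace_moment_def by (simp add: integral_eq_nn_integral borel_measurable_nu)
  also have "\<dots> = f l"
    using nn_integral_exp_eq[OF assms] nonneg[OF assms] by simp
  finally show ?thesis ..
qed

lemma exists_laplace_domain_below_pos: "0 < l \<Longrightarrow> \<exists>a\<in>laplace_domain. a < l"
  using positive_in_laplace_domain[of "l / 2"] by (intro bexI[of _ "l / 2"]) auto

lemma higher_deriv_eq_signed_laplace_moment_pos:
  "0 < l \<Longrightarrow> (deriv ^^ n) f l = (-1) ^ n * laplace_moment n l"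
  using higher_deriv_eq_signed_laplace_moment[of "{0<..}" f]
    exists_laplace_domain_below_pos eq_laplace_moment by auto

lemma deriv0_eq_signed_moment:
  assumes "deriv0_finite f n"
  shows "integrable nu (\<lambda>t. t ^ n) \<and> deriv0 f n = (-1) ^ n * (\<integral>t. t ^ n \<partial>nu)"
proof -
  obtain L where L: "((deriv ^^ n) f \<longlongrightarrow> L) (at_right 0)"
    using assms unfolding deriv0_finite_def by blast
  have "deriv0 f n = L"
    unfolding deriv0_def by (rule tendsto_Lim[OF _ L]) simp
  have "\<forall>\<^sub>F x in at_right 0. (-1) ^ n * (deriv ^^ n) f x = laplace_moment n x"
    using eventually_at_right_less[of 0]
    by eventually_elim (simp add: higher_deriv_eq_signed_laplace_moment_pos mult.assoc[symmetric])
  hence "(laplace_moment n \<longlongrightarrow> (-1) ^ n * L) (at_right 0)"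
    by (rule Lim_transform_eventually[OF tendsto_mult_left[OF L]])
  from moment_eq_if_laplace_moment_tendsto_at_right_0[OF positive_in_laplace_domain this]
  show ?thesis
    using \<open>deriv0 f n = L\<close> by (simp add: mult.assoc[symmetric])
qed

lemma moment_series_below_omega0:
  assumes "omega0 f < ereal l" and "l \<le> 0"
  shows "(\<forall>n. integrable nu (\<lambda>t. t ^ n))
    \<and> (\<exists>l' < l. summable (\<lambda>n. (- l') ^ n / fact n * (\<integral>t. t ^ n \<partial>nu)))
    \<and> (\<lambda>n. deriv0 f n / fact n * l ^ n) = (\<lambda>n. (- l) ^ n / fact n * (\<integral>t. t ^ n \<partial>nu))"
proof -
  \<comment> \<open>otherwise omega0 f = 0 by convention, contradicting l \<le> 0\<close>
  have finite: "\<forall>n. deriv0_finite f n"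
    using assms by (auto simp: omega0_def split: if_splits)
  have moments: "integrable nu (\<lambda>t. t ^ n)" for n
    using deriv0_eq_signed_moment finite by blast
  have coeff: "deriv0 f n / fact n * x ^ n = (- x) ^ n / fact n * (\<integral>t. t ^ n \<partial>nu)" for x n
  proof -
    have d: "deriv0 f n = (-1) ^ n * (\<integral>t. t ^ n \<partial>nu)"
      using deriv0_eq_signed_moment finite by blast
    have p: "(- x) ^ n = (-1) ^ n * x ^ n"
      by (rule power_minus)
    show ?thesis
      unfolding d p by (simp add: mult_ac)
  qed
  have "omega0 f = Inf (ereal ` {l. summable (\<lambda>n. deriv0 f n / fact n * l ^ n)})"
    using finite by (simp add: omega0_def)
  with assms(1) obtain l' where "l' < l" and "summable (\<lambda>n. deriv0 f n / fact n * l' ^ n)"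
    by (auto simp: Inf_less_iff)
  moreover have "(\<lambda>n. deriv0 f n / fact n * l ^ n) = (\<lambda>n. (- l) ^ n / fact n * (\<integral>t. t ^ n \<partial>nu))"
    by (simp only: coeff)
  ultimately show ?thesis
    using moments by (auto simp only: coeff)
qed

lemma exists_laplace_domain_below:
  assumes "omega0 f < ereal l"
  shows "\<exists>a\<in>laplace_domain. a < l"
proof (cases "0 < l")
  case False
  with moment_series_below_omega0[OF assms] obtain l' where "l' < l"
    and "summable (\<lambda>n. (- l') ^ n / fact n * (\<integral>t. t ^ n \<partial>nu))"
    and "\<And>n. integrable nu (\<lambda>t. t ^ n)"
    by auto
  with False show ?thesis
    using laplace_domain_if_moment_series_summable[of l'] by auto
qed (rule exists_laplace_domain_below_pos)

lemma ext_fun_eq_laplace_moment: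
  assumes "omega0 f < ereal l"
  shows "ext_fun f l = laplace_moment 0 l"
proof (cases "0 < l")
  case True
  then show ?thesis
    by (simp add: ext_fun_def eq_laplace_moment)
next
  case False
  then have "l \<in> laplace_domain"
    using exists_laplace_domain_below[OF assms] laplace_domain_mono less_imp_le by blast
  with False moment_series_below_omega0[OF assms]
  have "(\<lambda>n. deriv0 f n / fact n * l ^ n) sums laplace_moment 0 l"
    using moment_series_sums_laplace_moment[of l] by auto
  with False show ?thesis
    by (simp add: ext_fun_def sums_iff)
qed

end

theorem lemma2p1:
  fixes f :: "real \<Rightarrow> real" and nu :: "real measure"
  assumes "completely_monotone f"
    and "representing_measure f nu"
  shows "smooth_on {lam. omega0 f < ereal lam} (ext_fun f)
    \<and> (\<forall>m::nat. \<forall>lam::real. omega0 f < ereal lam \<longrightarrow>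
          (-1) ^ m * (deriv ^^ m) (ext_fun f) lam \<ge> 0
        \<and> integrable nu (\<lambda>t. t ^ m * exp (- lam * t))
        \<and> (deriv ^^ m) (ext_fun f) lam = (-1) ^ m * (\<integral> t. t ^ m * exp (- lam * t) \<partial>nu))
    \<and> (\<forall>lam::real. omega0 f < ereal lam \<longrightarrow>
          integrable nu (\<lambda>t. exp (- lam * t)) \<and> ext_fun f lam = (\<integral> t. exp (- lam * t) \<partial>nu))"
proof -
  interpret laplace_representation f nu
    using assms by unfold_locales
  let ?U = "{lam. omega0 f < ereal lam}"
  note U_props = open_Collect_ereal_less exists_laplace_domain_below
  have derivs: "(deriv ^^ m) (ext_fun f) l = (-1) ^ m * laplace_moment m l" if "l \<in> ?U" for m l
    using higher_deriv_eq_signed_laplace_moment[OF U_props] ext_fun_eq_laplace_moment that by auto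
  have "smooth_on ?U (ext_fun f)"
    unfolding smooth_on_def real_differentiable_def
    using has_real_derivative_if_eq_signed_laplace_moment[OF U_props] derivs by blast
  moreover have "integrable nu (\<lambda>t. t ^ m * exp (- l * t))" if "l \<in> ?U" for m l
    using exists_laplace_domain_below that integrable_power_mult_exp by blast
  moreover have "?U \<subseteq> laplace_domain"
    using exists_laplace_domain_below laplace_domain_mono less_imp_le by blast
  ultimately show ?thesis
    using derivs laplace_moment_nonneg ext_fun_eq_laplace_moment
    by (auto simp: laplace_moment_def laplace_domain_def mult.assoc[symmetric])
qed

end
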